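(* In the model of the context (with $\mathbf R_b=\mathbf I_M$, $M\ge2$, $\rho\in[0,1)$ fixed), suppose that $\Pr(Y>0)=1$ and $\Pr(\|\hat{\mathbf h}_b\|^2>0)=1$. Then there exists $\alpha_0\in(0,1)$ such that $\bar R_s^\infty(\alpha_0)>0$.
   Context: Let $M\ge 2$ be an integer; fix $\sigma^2>0$, $\tau_p>0$, $\rho_p>0$, $T_c>\tau_p$, $\eta=1-\tau_p/T_c$. Let $\mathbf R_e\in\mathbb C^{M\times M}$ be Hermitian positive definite, $\mathbf C\in\mathbb C^{M\times M}$ with spectral norm $\|\mathbf C\|\le1$, $\rho\in[0,1)$, and $\beta_b,\beta_e>0$. Let $\mathbf g_b,\mathbf u\sim\mathcal{CN}(\mathbf 0,\mathbf I_M)$ and $\mathbf n_p\sim\mathcal{CN}(\mathbf 0,\sigma^2\mathbf I_M)$ be mutually independent. Define $\mathbf h_b=\sqrt{\beta_b}\,\mathbf g_b$, $\mathbf g_e=\rho\mathbf C\mathbf g_b+\sqrt{1-\rho^2}\,\mathbf u$, $\mathbf h_e=\sqrt{\beta_e}\,\mathbf R_e^{1/2}\mathbf g_e$, $\mathbf y_p=\sqrt{\tau_p\rho_p}\,\mathbf h_b+\mathbf n_p$, the MMSE estimate $\hat{\mathbf h}_b=\sqrt{\tau_p\rho_p}\,\beta_b(\tau_p\rho_p\beta_b+\sigma^2)^{-1}\mathbf y_p$, and $\Omega_{\tilde h}=\dfrac{\beta_b\sigma^2}{\tau_p\rho_p\beta_b+\sigma^2}$ (the per-entry variance of the estimation error).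 Let $\mathbf w=\hat{\mathbf h}_b/\|\hat{\mathbf h}_b\|$ and let $\mathbf V\in\mathbb C^{M\times(M-1)}$ have orthonormal columns spanning the orthogonal complement of $\hat{\mathbf h}_b$. Set $X=\mathbf h_e^H\mathbf w$, $Y=\|\mathbf V^H\mathbf h_e\|^2$. For $\alpha\in(0,1)$ (fraction of power given to data) define $\gamma_b^\infty(\alpha)=\dfrac{\alpha\|\hat{\mathbf h}_b\|^2}{\Omega_{\tilde h}(\alpha+(1-\alpha)(M-1))}$, $\gamma_e^\infty(\alpha)=\dfrac{\alpha|X|^2}{(1-\alpha)Y}$, and the high-SNR ergodic secrecy rate $\bar R_s^\infty(\alpha)=\eta\,\mathbb E\big[(\log_2(1+\gamma_b^\infty(\alpha))-\log_2(1+\gamma_e^\infty(\alpha)))^+\big]$, with $(x)^+=\max\{0,x\}$. *)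

theory Defs
  imports "HOL-Analysis.Analysis" "HOL-Probability.Probability"
begin

text \<open>Complex linear algebra on complex^'m (dimension M = CARD('m)).\<close>

definition cinner :: "complex^'m \<Rightarrow> complex^'m \<Rightarrow> complex" where
  "cinner x y = (\<Sum>i\<in>UNIV. cnj (x$i) * y$i)"

definition conj_transpose :: "complex^'m^'n \<Rightarrow> complex^'n^'m" where
  "conj_transpose A = (\<chi> i j. cnj (A$j$i))"

definition hermitian :: "complex^'m^'m \<Rightarrow> bool" where
  "hermitian A \<longleftrightarrow> conj_transpose A = A"

definition pos_def_herm :: "complex^'m^'m \<Rightarrow> bool" where
  "pos_def_herm A \<longleftrightarrow> hermitian A \<and> (\<forall>x. x \<noteq> 0 \<longrightarrow> 0 < Re (cinner x (A *v x)))"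

definition pos_semidef_herm :: "complex^'m^'m \<Rightarrow> bool" where
  "pos_semidef_herm A \<longleftrightarrow> hermitian A \<and> (\<forall>x. 0 \<le> Re (cinner x (A *v x)))"

text \<open>The (unique) Hermitian positive semidefinite square root R^(1/2).\<close>
definition matrix_sqrt :: "complex^'m^'m \<Rightarrow> complex^'m^'m" where
  "matrix_sqrt A = (THE S. pos_semidef_herm S \<and> S ** S = A)"

definition spec_norm_le_1 :: "complex^'m^'m \<Rightarrow> bool" where
  "spec_norm_le_1 C \<longleftrightarrow> (\<forall>x. norm (C *v x) \<le> norm x)"

text \<open>Real and imaginary parts of the entries of a random complex vector, indexed by
  (vector number k, False = real part / True = imaginary part, entry j).\<close>
definition re_im_comps :: "('a \<Rightarrow> complex^'m) list \<Rightarrow> nat \<times> bool \<times> 'm \<Rightarrow> 'a \<Rightarrow> real" where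
  "re_im_comps Xs = (\<lambda>(k, b, j) \<omega>. if b then Im ((Xs ! k) \<omega> $ j) else Re ((Xs ! k) \<omega> $ j))"

text \<open>The random vectors Xs!k are mutually independent, with Xs!k \<sim> CN(0, vs!k \<cdot> I):
  all real and imaginary parts of all entries are independent real Gaussians
  with mean 0 and variance (vs!k)/2.\<close>
definition indep_circ_gaussians :: "'a measure \<Rightarrow> ('a \<Rightarrow> complex^'m) list \<Rightarrow> real list \<Rightarrow> bool" where
  "indep_circ_gaussians M Xs vs \<longleftrightarrow>
     length vs = length Xs \<and> (\<forall>v\<in>set vs. 0 < v) \<and>
     prob_space.indep_vars M (\<lambda>_. borel) (re_im_comps Xs) ({0..<length Xs} \<times> UNIV) \<and>
     (\<forall>k<length Xs. \<forall>b j. distributed M lborel (re_im_comps Xs (k, b, j))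
                                (normal_density 0 (sqrt (vs ! k / 2))))"

definition h_b_of :: "real \<Rightarrow> ('a \<Rightarrow> complex^'m) \<Rightarrow> 'a \<Rightarrow> complex^'m" where
  "h_b_of \<beta>_b g_b \<omega> = sqrt \<beta>_b *\<^sub>R g_b \<omega>"

definition g_e_of :: "real \<Rightarrow> complex^'m^'m \<Rightarrow> ('a \<Rightarrow> complex^'m) \<Rightarrow> ('a \<Rightarrow> complex^'m) \<Rightarrow> 'a \<Rightarrow> complex^'m" where
  "g_e_of \<rho> C g_b u \<omega> = \<rho> *\<^sub>R (C *v g_b \<omega>) + sqrt (1 - \<rho>\<^sup>2) *\<^sub>R u \<omega>"

definition h_e_of :: "real \<Rightarrow> complex^'m^'m \<Rightarrow> ('a \<Rightarrow> complex^'m) \<Rightarrow> 'a \<Rightarrow> complex^'m" where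
  "h_e_of \<beta>_e R_e g_e \<omega> = sqrt \<beta>_e *\<^sub>R (matrix_sqrt R_e *v g_e \<omega>)"

definition y_p_of :: "real \<Rightarrow> real \<Rightarrow> ('a \<Rightarrow> complex^'m) \<Rightarrow> ('a \<Rightarrow> complex^'m) \<Rightarrow> 'a \<Rightarrow> complex^'m" where
  "y_p_of \<tau>_p \<rho>_p h_b n_p \<omega> = sqrt (\<tau>_p * \<rho>_p) *\<^sub>R h_b \<omega> + n_p \<omega>"

text \<open>MMSE estimate of h_b.\<close>
definition hhat_of :: "real \<Rightarrow> real \<Rightarrow> real \<Rightarrow> real \<Rightarrow> ('a \<Rightarrow> complex^'m) \<Rightarrow> 'a \<Rightarrow> complex^'m" where
  "hhat_of \<tau>_p \<rho>_p \<beta>_b \<sigma>2 y_p \<omega> =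
     (sqrt (\<tau>_p * \<rho>_p) * \<beta>_b / (\<tau>_p * \<rho>_p * \<beta>_b + \<sigma>2)) *\<^sub>R y_p \<omega>"

definition Omega_of :: "real \<Rightarrow> real \<Rightarrow> real \<Rightarrow> real \<Rightarrow> real" where
  "Omega_of \<tau>_p \<rho>_p \<beta>_b \<sigma>2 = \<beta>_b * \<sigma>2 / (\<tau>_p * \<rho>_p * \<beta>_b + \<sigma>2)"

text \<open>X = h_e^H w with w = hhat/||hhat||, and Y = ||V^H h_e||^2, which equals the squared norm
  of the orthogonal projection of h_e onto the orthogonal complement of hhat, i.e.
  ||h_e - (w^H h_e) w||^2 (independent of the choice of the orthonormal basis V).\<close>
definition w_of :: "('a \<Rightarrow> complex^'m) \<Rightarrow> 'a \<Rightarrow> complex^'m" where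
  "w_of hhat \<omega> = (1 / norm (hhat \<omega>)) *\<^sub>R hhat \<omega>"

definition X_of :: "('a \<Rightarrow> complex^'m) \<Rightarrow> ('a \<Rightarrow> complex^'m) \<Rightarrow> 'a \<Rightarrow> complex" where
  "X_of h_e hhat \<omega> = cinner (h_e \<omega>) (w_of hhat \<omega>)"

definition Y_of :: "('a \<Rightarrow> complex^'m) \<Rightarrow> ('a \<Rightarrow> complex^'m) \<Rightarrow> 'a \<Rightarrow> real" where
  "Y_of h_e hhat \<omega> =
     (norm (h_e \<omega> - cinner (w_of hhat \<omega>) (h_e \<omega>) *s w_of hhat \<omega>))\<^sup>2"

end

theory Submission
  imports Defs
begin

(*
  Fix alpha = 1/2 and regard the integrand as a function of one outcome (g_b, u, n_p) of the three
  Gaussian vectors; it is continuous wherever hhat_b <> 0 and Y > 0. Since Pr(Y > 0) = 1, some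
  outcome has h_e <> 0, and changing only its pilot noise n_p makes hhat_b a nonzero vector
  orthogonal to h_e. There X = 0, so the eavesdropper's rate vanishes while Bob's is positive.
  By continuity the integrand stays above half that value on a product of small balls around
  this point, and independent circularly-symmetric Gaussians charge every such product.
*)

lemma cinner_commute: "cinner x y = cnj (cinner y x)"
  by (simp add: cinner_def mult.commute)

lemma cinner_zero_right [simp]: "cinner x 0 = 0"
  by (simp add: cinner_def)

lemma cinner_scaleR_right: "cinner x (c *\<^sub>R y) = of_real c * cinner x y"
  by (simp add: cinner_def sum_distrib_left scaleR_conv_of_real[where 'a=complex] mult_ac)

lemma continuous_cinner [continuous_intros]:
  "continuous F f \<Longrightarrow> continuous F g \<Longrightarrow> continuous F (\<lambda>x. cinner (f x) (g x))"
  unfolding cinner_def by (intro continuous_intros)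

lemma continuous_vec_lambda:
  "(\<And>i. continuous F (f i)) \<Longrightarrow> continuous F (\<lambda>x. \<chi> i. f i x)"
  unfolding continuous_def by (rule tendsto_vec_lambda)

lemma continuous_vector_scalar_mult [continuous_intros]:
  fixes g :: "_ \<Rightarrow> 'a::real_normed_algebra^'m"
  shows "continuous F f \<Longrightarrow> continuous F g \<Longrightarrow> continuous F (\<lambda>x. f x *s g x)"
  unfolding vector_scalar_mult_def by (intro continuous_vec_lambda continuous_intros)

lemma continuous_matrix_vector_mult [continuous_intros]:
  fixes A :: "'a::{euclidean_space,real_algebra_1}^'n^'m"
  shows "continuous F f \<Longrightarrow> continuous F (\<lambda>x. A *v f x)"
  by (rule bounded_linear.continuous[OF matrix_vector_mul_bounded_linear])

lemma cinner_sgn_eq_0: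
  assumes "cinner g h = 0"
  shows "cinner g (sgn h) = 0" "cinner (sgn h) g = 0"
proof -
  show "cinner g (sgn h) = 0"
    using assms by (simp add: sgn_div_norm divide_inverse_commute cinner_scaleR_right)
  then show "cinner (sgn h) g = 0"
    by (subst cinner_commute) simp
qed

lemma exists_nonzero_cinner_eq_0:
  fixes g :: "complex^'m"
  assumes "2 \<le> CARD('m)"
  obtains e where "e \<noteq> 0" "cinner g e = 0"
proof -
  obtain i j :: 'm where "i \<noteq> j"
    using assms by (meson card_2_iff' ex_card)
  show ?thesis
  proof (cases "g $ i = 0")
    case True
    have "cinner g (axis i 1) = cnj (g $ i)"
      by (simp add: cinner_def axis_def if_distrib cong: if_cong)
    with True show ?thesis
      using that[of "axis i 1"] by (simp add: axis_eq_0_iff)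
  next
    case False
    define e where "e = (\<chi> k. if k = i then cnj (g $ j) else if k = j then - cnj (g $ i) else 0)"
    have "e $ j \<noteq> 0"
      using False \<open>i \<noteq> j\<close> by (simp add: e_def)
    then have "e \<noteq> 0"
      by (metis zero_index)
    moreover have "cinner g e = cnj (g $ i) * cnj (g $ j) - cnj (g $ j) * cnj (g $ i)"
      using \<open>i \<noteq> j\<close> by (simp add: cinner_def e_def if_distrib sum.If_cases)
    ultimately show ?thesis
      using that[of e] by simp
  qed
qed

lemma dist_vec_lt_of_Re_Im:
  fixes x y :: "complex^'m"
  assumes "\<And>j. \<bar>Re (x $ j) - Re (y $ j)\<bar> < \<delta>" "\<And>j. \<bar>Im (x $ j) - Im (y $ j)\<bar> < \<delta>"
  shows "dist x y < 2 * real CARD('m) * \<delta>"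
proof -
  have "dist x y \<le> (\<Sum>j\<in>UNIV. norm ((x - y) $ j))"
    unfolding dist_norm norm_vec_def by (rule L2_set_le_sum) auto
  also have "\<dots> < (\<Sum>j\<in>(UNIV::'m set). 2 * \<delta>)"
  proof (rule sum_strict_mono)
    fix j :: 'm
    have "norm ((x - y) $ j) \<le> \<bar>Re ((x - y) $ j)\<bar> + \<bar>Im ((x - y) $ j)\<bar>"
      by (rule cmod_le)
    also have "\<dots> < 2 * \<delta>"
      using assms(1)[of j] assms(2)[of j] by simp
    finally show "norm ((x - y) $ j) < 2 * \<delta>" .
  qed auto
  finally show ?thesis
    by simp
qed

lemma (in prob_space) normal_interval_prob_pos:
  assumes "distributed M lborel X (normal_density \<mu> \<sigma>)" "0 < \<sigma>" "a < b"
  shows "0 < prob (X -` {a<..<b} \<inter> space M)"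
proof -
  have "(\<integral>\<^sup>+x. ennreal (normal_density \<mu> \<sigma> x) * indicator {a<..<b} x \<partial>lborel) \<noteq> 0"
  proof
    assume "(\<integral>\<^sup>+x. ennreal (normal_density \<mu> \<sigma> x) * indicator {a<..<b} x \<partial>lborel) = 0"
    then have "AE x in lborel. ennreal (normal_density \<mu> \<sigma> x) * indicator {a<..<b} x = 0"
      by (subst (asm) nn_integral_0_iff_AE) auto
    then have "AE x in lborel. x \<notin> {a<..<b}"
      by eventually_elim
        (auto split: split_indicator
          simp: normal_density_pos[OF \<open>0 < \<sigma>\<close>, THEN dual_order.strict_implies_not_eq])
    then have "{a<..<b} \<in> null_sets lborel"
      by (simp add: AE_iff_null_sets)
    with \<open>a < b\<close> show False
      by (simp add: null_sets_def)
  qed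
  then have "emeasure M (X -` {a<..<b} \<inter> space M) \<noteq> 0"
    using distributed_emeasure[OF assms(1)] by simp
  then show ?thesis
    by (simp add: emeasure_eq_measure less_le)
qed

lemma (in prob_space) indep_circ_gaussians_balls_prob_pos:
  fixes Xs :: "('a \<Rightarrow> complex^'m) list"
  assumes "indep_circ_gaussians M Xs vs" "Xs \<noteq> []" "length ps = length Xs" "0 < r"
  obtains B where "B \<in> events" "0 < prob B"
    "\<And>\<omega> k. \<omega> \<in> B \<Longrightarrow> k < length Xs \<Longrightarrow> dist ((Xs ! k) \<omega>) (ps ! k) < r"
proof -
  define I where "I = {0..<length Xs} \<times> (UNIV :: (bool \<times> 'm) set)"
  define c where "c = (\<lambda>(k, b, j). if b then Im (ps ! k $ j) else Re (ps ! k $ j))"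
  define \<delta> where "\<delta> = r / (2 * real CARD('m))"
  define A where "A i = re_im_comps Xs i -` {c i - \<delta> <..< c i + \<delta>} \<inter> space M" for i
  define B where "B = (\<Inter>i\<in>I. A i)"
  have indep: "indep_vars (\<lambda>_. borel) (re_im_comps Xs) I"
    and normal: "\<And>k b j. k < length Xs \<Longrightarrow>
      distributed M lborel (re_im_comps Xs (k, b, j)) (normal_density 0 (sqrt (vs ! k / 2)))"
    and var_pos: "\<And>k. k < length Xs \<Longrightarrow> 0 < vs ! k"
    using assms(1) unfolding indep_circ_gaussians_def I_def by (auto simp: nth_mem)
  have "0 < \<delta>"
    using \<open>0 < r\<close> by (simp add: \<delta>_def)
  have A_gen: "A i \<in> {re_im_comps Xs i -` S \<inter> space M |S. S \<in> sets borel}" for i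
    unfolding A_def by auto
  have "finite I" "I \<noteq> {}"
    using assms(2) by (auto simp: I_def)
  have "prob B = (\<Prod>i\<in>I. prob (A i))"
    unfolding B_def using indep A_gen \<open>finite I\<close> \<open>I \<noteq> {}\<close>
    by (intro indep_setsD[OF conjunct2[OF indep[unfolded indep_vars_def2]]]) auto
  also have "\<dots> > 0"
  proof (rule prod_pos)
    fix i assume "i \<in> I"
    then obtain k b j where "i = (k, b, j)" "k < length Xs"
      by (auto simp: I_def)
    with \<open>0 < \<delta>\<close> var_pos[of k] show "0 < prob (A i)"
      unfolding A_def by (auto intro!: normal_interval_prob_pos[OF normal])
  qed
  finally have "0 < prob B" .
  moreover have "B \<in> events"
  proof -
    have "re_im_comps Xs i \<in> borel_measurable M" if "i \<in> I" for i
      using indep that by (simp add: indep_vars_def2)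
    then have "A i \<in> events" if "i \<in> I" for i
      unfolding A_def using that by (simp add: measurable_sets)
    with \<open>finite I\<close> \<open>I \<noteq> {}\<close> show ?thesis
      unfolding B_def by (intro sets.finite_INT) auto
  qed
  moreover have "dist ((Xs ! k) \<omega>) (ps ! k) < r" if "\<omega> \<in> B" "k < length Xs" for \<omega> k
  proof -
    have "(k, b, j) \<in> I" for b j
      using \<open>k < length Xs\<close> by (simp add: I_def)
    with \<open>\<omega> \<in> B\<close> have in_A: "\<omega> \<in> A (k, b, j)" for b j
      unfolding B_def by blast
    have close: "\<bar>re_im_comps Xs (k, b, j) \<omega> - c (k, b, j)\<bar> < \<delta>" for b j
      using in_A[of b j] unfolding A_def by (auto simp: abs_less_iff)
    have "dist ((Xs ! k) \<omega>) (ps ! k) < 2 * real CARD('m) * \<delta>"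
      using close[of False] close[of True]
      by (intro dist_vec_lt_of_Re_Im) (simp_all add: re_im_comps_def c_def)
    then show ?thesis
      by (simp add: \<delta>_def)
  qed
  ultimately show ?thesis
    using that by blast
qed

lemma dist_Pair_le: "dist (a, b) (c, d) \<le> dist a c + dist b d"
  unfolding dist_Pair_Pair by (rule sqrt_sum_squares_le_sum) auto

lemma (in prob_space) indep_circ_gaussians_nn_integral_pos:
  fixes X1 X2 X3 :: "'a \<Rightarrow> complex^'m"
    and f :: "(complex^'m) \<times> (complex^'m) \<times> (complex^'m) \<Rightarrow> real"
  assumes "indep_circ_gaussians M [X1, X2, X3] vs" "isCont f p" "0 < f p"
  shows "0 < (\<integral>\<^sup>+\<omega>. ennreal (f (X1 \<omega>, X2 \<omega>, X3 \<omega>)) \<partial>M)"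
proof -
  obtain d where "0 < d" and d: "\<And>x. dist x p < d \<Longrightarrow> dist (f x) (f p) < f p / 2"
    using continuous_at_eps_delta[THEN iffD1, OF assms(2), rule_format, of "f p / 2"] assms(3)
    by auto
  have near: "f p / 2 < f x" if "dist x p < d" for x
    using d[OF that] unfolding dist_real_def abs_less_iff by linarith
  obtain p1 p2 p3 where p: "p = (p1, p2, p3)"
    by (cases p) auto
  obtain B where "B \<in> events" "0 < prob B" and
    close: "\<And>\<omega> k. \<omega> \<in> B \<Longrightarrow> k < 3 \<Longrightarrow> dist (([X1, X2, X3] ! k) \<omega>) ([p1, p2, p3] ! k) < d / 3"
  proof (rule indep_circ_gaussians_balls_prob_pos[OF assms(1), of "[p1, p2, p3]" "d / 3"])
    fix B assume "B \<in> events" "0 < prob B"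
      "\<And>\<omega> k. \<omega> \<in> B \<Longrightarrow> k < length [X1, X2, X3] \<Longrightarrow> dist (([X1, X2, X3] ! k) \<omega>) ([p1, p2, p3] ! k) < d / 3"
    with that show thesis
      by simp
  qed (use \<open>0 < d\<close> in simp_all)
  have above: "f p / 2 < f (X1 \<omega>, X2 \<omega>, X3 \<omega>)" if "\<omega> \<in> B" for \<omega>
  proof (rule near)
    have "dist (X1 \<omega>, X2 \<omega>, X3 \<omega>) p \<le> dist (X1 \<omega>) p1 + dist (X2 \<omega>, X3 \<omega>) (p2, p3)"
      unfolding p by (rule dist_Pair_le)
    also have "\<dots> \<le> dist (X1 \<omega>) p1 + (dist (X2 \<omega>) p2 + dist (X3 \<omega>) p3)"
      using dist_Pair_le by (rule add_left_mono)
    also have "\<dots> < d"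
      using close[OF that, of 0] close[OF that, of 1] close[OF that, of 2] by simp
    finally show "dist (X1 \<omega>, X2 \<omega>, X3 \<omega>) p < d" .
  qed
  have "0 < ennreal (f p / 2) * prob B"
    using \<open>0 < f p\<close> \<open>0 < prob B\<close> by (simp add: ennreal_zero_less_mult_iff)
  also have "\<dots> = (\<integral>\<^sup>+\<omega>. ennreal (f p / 2) * indicator B \<omega> \<partial>M)"
    using \<open>B \<in> events\<close> by (simp add: nn_integral_cmult_indicator emeasure_eq_measure)
  also have "\<dots> \<le> (\<integral>\<^sup>+\<omega>. ennreal (f (X1 \<omega>, X2 \<omega>, X3 \<omega>)) \<partial>M)"
  proof (rule nn_integral_mono)
    fix \<omega>
    show "ennreal (f p / 2) * indicator B \<omega> \<le> ennreal (f (X1 \<omega>, X2 \<omega>, X3 \<omega>))"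
      using ennreal_leI[OF less_imp_le[OF above]] by (cases "\<omega> \<in> B") simp_all
  qed
  finally show ?thesis .
qed

(* log2(1 + gamma_b) - log2(1 + gamma_e) with h = hhat_b, g = h_e, sgn h = w and
   K = Omega (alpha + (1 - alpha)(M - 1)). *)
definition secrecy_gap :: "real \<Rightarrow> real \<Rightarrow> complex^'m \<Rightarrow> complex^'m \<Rightarrow> real" where
  "secrecy_gap K \<alpha> h g =
     log 2 (1 + \<alpha> * (norm h)\<^sup>2 / K)
     - log 2 (1 + \<alpha> * (cmod (cinner g (sgn h)))\<^sup>2
                  / ((1 - \<alpha>) * (norm (g - cinner (sgn h) g *s sgn h))\<^sup>2))"

lemma isCont_secrecy_gap:
  assumes "isCont f x" "isCont g x" "f x \<noteq> 0" "g x - cinner (sgn (f x)) (g x) *s sgn (f x) \<noteq> 0"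
    and "0 < K" "0 \<le> \<alpha>" "\<alpha> < 1"
  shows "isCont (\<lambda>x. secrecy_gap K \<alpha> (f x) (g x)) x"
proof -
  let ?X = "cinner (g x) (sgn (f x))"
  let ?Y = "norm (g x - cinner (sgn (f x)) (g x) *s sgn (f x))"
  have "0 \<le> \<alpha> * (norm (f x))\<^sup>2 / K" "0 \<le> \<alpha> * (cmod ?X)\<^sup>2 / ((1 - \<alpha>) * ?Y\<^sup>2)"
    using assms(5-7) by simp_all
  then have "1 + \<alpha> * (norm (f x))\<^sup>2 / K \<noteq> 0" "1 + \<alpha> * (cmod ?X)\<^sup>2 / ((1 - \<alpha>) * ?Y\<^sup>2) \<noteq> 0"
    by linarith+
  with assms show ?thesis
    unfolding secrecy_gap_def by (intro continuous_intros) simp_all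
qed

lemma secrecy_gap_pos:
  assumes "cinner g h = 0" "h \<noteq> 0" "0 < K" "0 < \<alpha>"
  shows "0 < secrecy_gap K \<alpha> h g"
proof -
  have "0 < \<alpha> * (norm h)\<^sup>2 / K"
    using assms(2-) by simp
  then show ?thesis
    by (simp add: secrecy_gap_def cinner_sgn_eq_0[OF assms(1)])
qed

(* The channel model evaluated at one outcome (g_b, u, n_p) of the three Gaussian vectors. *)
definition hhat_sample ::
    "real \<Rightarrow> real \<Rightarrow> real \<Rightarrow> real \<Rightarrow> (complex^'m) \<times> (complex^'m) \<times> (complex^'m) \<Rightarrow> complex^'m" where
  "hhat_sample \<tau>_p \<rho>_p \<beta>_b \<sigma>2 =
     hhat_of \<tau>_p \<rho>_p \<beta>_b \<sigma>2 (y_p_of \<tau>_p \<rho>_p (h_b_of \<beta>_b fst) (\<lambda>x. snd (snd x)))"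

definition h_e_sample ::
    "real \<Rightarrow> complex^'m^'m \<Rightarrow> real \<Rightarrow> complex^'m^'m \<Rightarrow> (complex^'m) \<times> (complex^'m) \<times> (complex^'m) \<Rightarrow> complex^'m" where
  "h_e_sample \<beta>_e R_e \<rho> C = h_e_of \<beta>_e R_e (g_e_of \<rho> C fst (\<lambda>x. fst (snd x)))"

lemma hhat_of_eq_hhat_sample:
  "hhat_of \<tau>_p \<rho>_p \<beta>_b \<sigma>2 (y_p_of \<tau>_p \<rho>_p (h_b_of \<beta>_b g_b) n_p) \<omega>
     = hhat_sample \<tau>_p \<rho>_p \<beta>_b \<sigma>2 (g_b \<omega>, u \<omega>, n_p \<omega>)"
  by (simp add: hhat_sample_def hhat_of_def y_p_of_def h_b_of_def)

lemma h_e_of_eq_h_e_sample: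
  "h_e_of \<beta>_e R_e (g_e_of \<rho> C g_b u) \<omega> = h_e_sample \<beta>_e R_e \<rho> C (g_b \<omega>, u \<omega>, n_p \<omega>)"
  by (simp add: h_e_sample_def h_e_of_def g_e_of_def)

lemma isCont_hhat_sample: "isCont (hhat_sample \<tau>_p \<rho>_p \<beta>_b \<sigma>2) x"
  unfolding hhat_sample_def hhat_of_def y_p_of_def h_b_of_def by (intro continuous_intros)

lemma isCont_h_e_sample: "isCont (h_e_sample \<beta>_e R_e \<rho> C) x"
  unfolding h_e_sample_def h_e_of_def g_e_of_def by (intro continuous_intros)

lemma exists_sample_orthogonal_estimate:
  fixes g u n :: "complex^'m"
  assumes "2 \<le> CARD('m)" "0 < \<tau>_p" "0 < \<rho>_p" "0 < \<beta>_b" "0 < \<sigma>2"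
    and "h_e_sample \<beta>_e R_e \<rho> C (g, u, n) \<noteq> 0"
  obtains p where "hhat_sample \<tau>_p \<rho>_p \<beta>_b \<sigma>2 p \<noteq> 0" "h_e_sample \<beta>_e R_e \<rho> C p \<noteq> 0"
    "cinner (h_e_sample \<beta>_e R_e \<rho> C p) (hhat_sample \<tau>_p \<rho>_p \<beta>_b \<sigma>2 p) = 0"
proof -
  obtain e where "e \<noteq> 0" and orth: "cinner (h_e_sample \<beta>_e R_e \<rho> C (g, u, n)) e = 0"
    using exists_nonzero_cinner_eq_0[OF assms(1)] by blast
  define c where "c = sqrt (\<tau>_p * \<rho>_p) * \<beta>_b / (\<tau>_p * \<rho>_p * \<beta>_b + \<sigma>2)"
  define p where "p = (g, u, e - (sqrt (\<tau>_p * \<rho>_p) * sqrt \<beta>_b) *\<^sub>R g)"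
  have "0 < c"
    using assms(2-5) unfolding c_def by (intro divide_pos_pos mult_pos_pos add_pos_pos) auto
  have hhat_p: "hhat_sample \<tau>_p \<rho>_p \<beta>_b \<sigma>2 p = c *\<^sub>R e"
    by (simp add: hhat_sample_def p_def c_def hhat_of_def y_p_of_def h_b_of_def algebra_simps)
  have h_e_p: "h_e_sample \<beta>_e R_e \<rho> C p = h_e_sample \<beta>_e R_e \<rho> C (g, u, n)"
    by (simp add: h_e_sample_def p_def h_e_of_def g_e_of_def)
  show ?thesis
    by (rule that[of p])
      (use \<open>0 < c\<close> \<open>e \<noteq> 0\<close> assms(6) orth in \<open>simp_all add: hhat_p h_e_p cinner_scaleR_right\<close>)
qed

theorem lemma1:
  fixes M :: "'a measure"
    and g_b u n_p :: "'a \<Rightarrow> complex^'m"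
    and C R_e :: "complex^'m^'m"
    and \<sigma>2 \<tau>_p \<rho>_p T_c \<rho> \<beta>_b \<beta>_e :: real
  defines "hhat \<equiv> hhat_of \<tau>_p \<rho>_p \<beta>_b \<sigma>2 (y_p_of \<tau>_p \<rho>_p (h_b_of \<beta>_b g_b) n_p)"
    and "h_e \<equiv> h_e_of \<beta>_e R_e (g_e_of \<rho> C g_b u)"
  assumes "prob_space M"
    and "CARD('m) \<ge> 2"
    and "\<sigma>2 > 0" and "\<tau>_p > 0" and "\<rho>_p > 0" and "T_c > \<tau>_p"
    and "pos_def_herm R_e"
    and "spec_norm_le_1 C"
    and "0 \<le> \<rho>" and "\<rho> < 1"
    and "\<beta>_b > 0" and "\<beta>_e > 0"
    and "indep_circ_gaussians M [g_b, u, n_p] [1, 1, \<sigma>2]"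
    and "measure M {\<omega> \<in> space M. Y_of h_e hhat \<omega> > 0} = 1"
    and "measure M {\<omega> \<in> space M. (norm (hhat \<omega>))\<^sup>2 > 0} = 1"
  shows "\<exists>\<alpha>\<^sub>0 \<in> {0<..<1::real}.
           ennreal (1 - \<tau>_p / T_c) *
             (\<integral>\<^sup>+ \<omega>. ennreal (max 0
                 (log 2 (1 + \<alpha>\<^sub>0 * (norm (hhat \<omega>))\<^sup>2
                        / (Omega_of \<tau>_p \<rho>_p \<beta>_b \<sigma>2 * (\<alpha>\<^sub>0 + (1 - \<alpha>\<^sub>0) * (real CARD('m) - 1))))
                - log 2 (1 + \<alpha>\<^sub>0 * (cmod (X_of h_e hhat \<omega>))\<^sup>2
                        / ((1 - \<alpha>\<^sub>0) * Y_of h_e hhat \<omega>)))) \<partial>M) > 0"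
proof -
  interpret prob_space M by fact
  define \<alpha> :: real where "\<alpha> = 1 / 2"
  define K where "K = Omega_of \<tau>_p \<rho>_p \<beta>_b \<sigma>2 * (\<alpha> + (1 - \<alpha>) * (real CARD('m) - 1))"
  define F where "F x = max 0 (secrecy_gap K \<alpha> (hhat_sample \<tau>_p \<rho>_p \<beta>_b \<sigma>2 x) (h_e_sample \<beta>_e R_e \<rho> C x))" for x
  have sample: "hhat \<omega> = hhat_sample \<tau>_p \<rho>_p \<beta>_b \<sigma>2 (g_b \<omega>, u \<omega>, n_p \<omega>)"
    "h_e \<omega> = h_e_sample \<beta>_e R_e \<rho> C (g_b \<omega>, u \<omega>, n_p \<omega>)" for \<omega>
    unfolding hhat_def h_e_def by (rule hhat_of_eq_hhat_sample h_e_of_eq_h_e_sample)+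
  have "{\<omega> \<in> space M. 0 < Y_of h_e hhat \<omega>} \<noteq> {}"
    using assms(16) by force
  then obtain \<omega> where "h_e \<omega> \<noteq> 0"
    by (force simp: Y_of_def)
  then obtain p where p: "hhat_sample \<tau>_p \<rho>_p \<beta>_b \<sigma>2 p \<noteq> 0" "h_e_sample \<beta>_e R_e \<rho> C p \<noteq> 0"
    and orth: "cinner (h_e_sample \<beta>_e R_e \<rho> C p) (hhat_sample \<tau>_p \<rho>_p \<beta>_b \<sigma>2 p) = 0"
    using exists_sample_orthogonal_estimate[OF assms(4,6,7,13,5)] by (metis sample(2))
  have "0 < K"
    using assms(4-7,13) unfolding K_def Omega_of_def \<alpha>_def
    by (intro mult_pos_pos divide_pos_pos add_pos_pos add_pos_nonneg) auto
  then have "isCont F p" "0 < F p"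
    unfolding F_def using p secrecy_gap_pos[OF orth]
    by (auto intro!: continuous_intros isCont_secrecy_gap isCont_hhat_sample isCont_h_e_sample
        simp: cinner_sgn_eq_0(2)[OF orth] \<alpha>_def)
  then have "0 < (\<integral>\<^sup>+\<omega>. ennreal (F (g_b \<omega>, u \<omega>, n_p \<omega>)) \<partial>M)"
    by (rule indep_circ_gaussians_nn_integral_pos[OF assms(15)])
  moreover have "0 < ennreal (1 - \<tau>_p / T_c)"
    using assms(6,8) by simp
  moreover have "w_of hhat \<omega> = sgn (hhat \<omega>)" for \<omega>
    by (simp add: w_of_def sgn_div_norm divide_inverse_commute)
  ultimately show ?thesis
    unfolding F_def secrecy_gap_def K_def sample[symmetric] X_of_def Y_of_def
    by (intro bexI[of _ \<alpha>]) (simp_all add: \<alpha>_def ennreal_zero_less_mult_iff)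
qed

end
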